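(* Let $q$ be a prime power, $u,v\in\mathbb{F}_q^3$ and $\mu\in\mathbb{F}_q$. (1) For every $\lambda\in\mathbb{F}_q^*$, $\widetilde{B}(\lambda u)\cap\widetilde{B}(\mu v)=\lambda\,[\widetilde{B}(u)\cap\widetilde{B}(\lambda^{-1}\mu v)]$. (2) If the family $\{\widetilde{B}(\lambda u):\lambda\in\mathbb{F}_q^*\}$ is a partition of $\widetilde{E}(u)$ and the family $\{\widetilde{B}(\lambda v):\lambda\in\mathbb{F}_q^*\}$ is a partition of $\widetilde{E}(v)$ (i.e. their members are pairwise disjoint with unions $\widetilde{E}(u)$, resp. $\widetilde{E}(v)$), then \[|\widetilde{E}(u)\cap\widetilde{E}(v)|=(q-1)\sum_{\mu\in\mathbb{F}_q^*}|\widetilde{B}(u)\cap\widetilde{B}(\mu v)|.\]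
   Context: $\mathbb{F}_q$ is the finite field with $q$ elements. Hamming distance $d(u,v)=|\{i:u_i\ne v_i\}|$ on $\mathbb{F}_q^3$; $B(u)=\{v:d(u,v)\le1\}$; $E(u)=\bigcup_{\lambda\in\mathbb{F}_q}B(\lambda u)$. $\mathcal{D}_q=\{(u_1,u_2,u_3)\in\mathbb{F}_q^3: u_1,u_2,u_3 \text{ pairwise distinct and nonzero}\}$, $\widetilde{B}(u)=B(u)\cap\mathcal{D}_q$, $\widetilde{E}(u)=E(u)\cap\mathcal{D}_q$. For a set $Z$ and scalar $\lambda$, $\lambda Z=\{\lambda z: z\in Z\}$. *)

theory Defs
  imports Main
begin

type_synonym 'a vec3 = "'a \<times> 'a \<times> 'a"

definition smul :: "'a::field \<Rightarrow> 'a vec3 \<Rightarrow> 'a vec3" where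
  "smul l u = (case u of (a, b, c) \<Rightarrow> (l * a, l * b, l * c))"

definition smul_set :: "'a::field \<Rightarrow> 'a vec3 set \<Rightarrow> 'a vec3 set" where
  "smul_set l Z = smul l ` Z"

definition hdist :: "'a vec3 \<Rightarrow> 'a vec3 \<Rightarrow> nat" where
  "hdist u v = (case u of (u1, u2, u3) \<Rightarrow> case v of (v1, v2, v3) \<Rightarrow>
      (if u1 \<noteq> v1 then 1 else 0) + (if u2 \<noteq> v2 then 1 else 0) + (if u3 \<noteq> v3 then 1 else 0))"

definition ball1 :: "'a vec3 \<Rightarrow> 'a vec3 set" where
  "ball1 u = {v. hdist u v \<le> 1}"

definition Eset :: "'a::field vec3 \<Rightarrow> 'a vec3 set" where
  "Eset u = (\<Union>l\<in>(UNIV::'a set). ball1 (smul l u))"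

definition Dq :: "'a::field vec3 set" where
  "Dq = {(u1, u2, u3). u1 \<noteq> u2 \<and> u1 \<noteq> u3 \<and> u2 \<noteq> u3 \<and> u1 \<noteq> 0 \<and> u2 \<noteq> 0 \<and> u3 \<noteq> 0}"

definition Bt :: "'a::field vec3 \<Rightarrow> 'a vec3 set" where
  "Bt u = ball1 u \<inter> Dq"

definition Et :: "'a::field vec3 \<Rightarrow> 'a vec3 set" where
  "Et u = Eset u \<inter> Dq"

definition is_partition_fam :: "'a::field vec3 \<Rightarrow> bool" where
  "is_partition_fam u =
     ((\<forall>l\<in>-{0}. \<forall>l'\<in>-{0}. l \<noteq> l' \<longrightarrow> Bt (smul l u) \<inter> Bt (smul l' u) = {})
      \<and> (\<Union>l\<in>-{0}. Bt (smul l u)) = Et u)"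

end

theory Submission
  imports Defs "HOL-Library.Disjoint_Sets"
begin

text \<open>Scaling by a nonzero \<open>l\<close> is a bijection of the cube that preserves Hamming distance and
  maps \<open>Dq\<close> onto itself, so it maps \<open>Bt w\<close> onto \<open>Bt (l w)\<close>; this gives (1). For (2), the
  partition hypotheses write \<open>Et u \<inter> Et v\<close> as the disjoint union of the sets
  \<open>Bt (l u) \<inter> Bt (l' v)\<close> over pairs of nonzero scalars; by (1) the one indexed by \<open>(l, l')\<close> has
  the size of \<open>Bt u \<inter> Bt (l\<^sup>-\<^sup>1 l' v)\<close>, and for fixed \<open>l\<close> the map \<open>l' \<mapsto> l\<^sup>-\<^sup>1 l'\<close> permutes the
  nonzero scalars.\<close>

lemma smul_smul: "smul l (smul m x) = smul (l * m) x"
  by (cases x) (simp add: smul_def mult.assoc)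

lemma smul_inverse_cancel: "(l::'a::field) \<noteq> 0 \<Longrightarrow> smul l (smul (inverse l) x) = x"
  by (cases x) (simp add: smul_def)

lemma inj_on_smul: "(l::'a::field) \<noteq> 0 \<Longrightarrow> inj_on (smul l) A"
  unfolding inj_on_def by (auto simp: smul_def split: prod.splits)

lemma hdist_smul: "(l::'a::field) \<noteq> 0 \<Longrightarrow> hdist (smul l x) (smul l y) = hdist x y"
  by (cases x; cases y) (simp add: smul_def hdist_def)

lemma smul_in_Dq: "(l::'a::field) \<noteq> 0 \<Longrightarrow> x \<in> Dq \<Longrightarrow> smul l x \<in> Dq"
  by (cases x) (auto simp: smul_def Dq_def)

lemma image_smul_eqI:
  fixes l :: "'a::field"
  assumes "l \<noteq> 0"
    and "\<And>x. x \<in> A \<Longrightarrow> smul l x \<in> B"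
    and "\<And>y. y \<in> B \<Longrightarrow> smul (inverse l) y \<in> A"
  shows "smul l ` A = B"
proof
  show "smul l ` A \<subseteq> B" using assms(2) by blast
  show "B \<subseteq> smul l ` A"
  proof
    fix y assume "y \<in> B"
    then have "smul (inverse l) y \<in> A" by (rule assms(3))
    then show "y \<in> smul l ` A" using smul_inverse_cancel[OF assms(1), of y] by (metis image_eqI)
  qed
qed

lemma image_smul_ball1: "(l::'a::field) \<noteq> 0 \<Longrightarrow> smul l ` ball1 w = ball1 (smul l w)"
proof (rule image_smul_eqI)
  assume l: "l \<noteq> 0"
  fix y
  have "hdist w (smul (inverse l) y) = hdist (smul l w) y"
    using hdist_smul[OF l, of w "smul (inverse l) y"] by (simp add: smul_inverse_cancel[OF l])
  then show "y \<in> ball1 (smul l w) \<Longrightarrow> smul (inverse l) y \<in> ball1 w"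
    by (simp add: ball1_def)
qed (simp_all add: ball1_def hdist_smul)

lemma image_smul_Dq: "(l::'a::field) \<noteq> 0 \<Longrightarrow> smul l ` Dq = Dq"
  by (rule image_smul_eqI) (auto intro: smul_in_Dq)

lemma Bt_smul: "(l::'a::field) \<noteq> 0 \<Longrightarrow> Bt (smul l w) = smul l ` Bt w"
  by (simp add: Bt_def image_Int inj_on_smul image_smul_ball1 image_smul_Dq)

lemma Bt_smul_Int_Bt_smul:
  fixes l :: "'a::field"
  assumes "l \<noteq> 0"
  shows "Bt (smul l u) \<inter> Bt (smul \<mu> v) = smul_set l (Bt u \<inter> Bt (smul (inverse l * \<mu>) v))"
proof -
  have "smul \<mu> v = smul l (smul (inverse l * \<mu>) v)"
    using assms by (simp add: smul_smul mult.assoc[symmetric])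
  then show ?thesis
    using assms by (simp add: smul_set_def Bt_smul image_Int inj_on_smul)
qed

lemma is_partition_fam_iff:
  "is_partition_fam u \<longleftrightarrow>
     disjoint_family_on (\<lambda>l. Bt (smul l u)) (-{0}) \<and> (\<Union>l\<in>-{0}. Bt (smul l u)) = Et u"
  by (simp add: is_partition_fam_def disjoint_family_on_def)

lemma card_Int_UN_disjoint:
  assumes "finite I" "finite J" "\<And>i. i \<in> I \<Longrightarrow> finite (A i)"
    and "disjoint_family_on A I" "disjoint_family_on B J"
  shows "card ((\<Union>i\<in>I. A i) \<inter> (\<Union>j\<in>J. B j)) = (\<Sum>i\<in>I. \<Sum>j\<in>J. card (A i \<inter> B j))"
proof -
  have "(\<Union>i\<in>I. A i) \<inter> (\<Union>j\<in>J. B j) = (\<Union>i\<in>I. \<Union>j\<in>J. A i \<inter> B j)"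
    by blast
  also have "card \<dots> = (\<Sum>i\<in>I. card (\<Union>j\<in>J. A i \<inter> B j))"
    using assms(1,3,4) by (intro card_UN_disjoint') (auto simp: disjoint_family_on_def)
  also have "\<dots> = (\<Sum>i\<in>I. \<Sum>j\<in>J. card (A i \<inter> B j))"
    using assms(2,3,5)
    by (intro sum.cong refl card_UN_disjoint') (auto simp: disjoint_family_on_def)
  finally show ?thesis .
qed

lemma sum_nonzero_mult_left:
  fixes c :: "'a::field"
  assumes "c \<noteq> 0"
  shows "(\<Sum>m\<in>-{0}. f (c * m)) = (\<Sum>m\<in>-{0}. f m)"
proof (rule sum.reindex_bij_witness[where i = "\<lambda>m. inverse c * m" and j = "\<lambda>m. c * m"])
qed (use assms in auto)

lemma card_nonzero: "card (-{0::'a::{zero, finite}}) = card (UNIV::'a set) - 1"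
  by (simp add: Compl_eq_Diff_UNIV card_Diff_singleton)

theorem lemma8:
  fixes u v :: "'a::{field, finite} vec3" and \<mu> :: 'a
  shows "(\<forall>l::'a. l \<noteq> 0 \<longrightarrow>
            Bt (smul l u) \<inter> Bt (smul \<mu> v)
              = smul_set l (Bt u \<inter> Bt (smul (inverse l * \<mu>) v)))
       \<and> (is_partition_fam u \<and> is_partition_fam v \<longrightarrow>
            card (Et u \<inter> Et v)
              = (card (UNIV::'a set) - 1) * (\<Sum>m\<in>-{0::'a}. card (Bt u \<inter> Bt (smul m v))))"
proof (intro conjI allI impI)
  show "Bt (smul l u) \<inter> Bt (smul \<mu> v) = smul_set l (Bt u \<inter> Bt (smul (inverse l * \<mu>) v))"
    if "l \<noteq> 0" for l
    using that by (rule Bt_smul_Int_Bt_smul)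
next
  assume "is_partition_fam u \<and> is_partition_fam v"
  then have "disjoint_family_on (\<lambda>l. Bt (smul l u)) (-{0})"
    and "disjoint_family_on (\<lambda>l'. Bt (smul l' v)) (-{0})"
    and "Et u \<inter> Et v = (\<Union>l\<in>-{0}. Bt (smul l u)) \<inter> (\<Union>l'\<in>-{0}. Bt (smul l' v))"
    by (simp_all add: is_partition_fam_iff)
  then have "card (Et u \<inter> Et v)
      = (\<Sum>l\<in>-{0}. \<Sum>l'\<in>-{0}. card (Bt (smul l u) \<inter> Bt (smul l' v)))"
    by (simp add: card_Int_UN_disjoint)
  also have "\<dots> = (\<Sum>l\<in>-{0::'a}. \<Sum>l'\<in>-{0}. card (Bt u \<inter> Bt (smul (inverse l * l') v)))"
    by (intro sum.cong refl)
       (simp add: Bt_smul_Int_Bt_smul smul_set_def card_image inj_on_smul)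
  also have "\<dots> = (\<Sum>l\<in>-{0::'a}. \<Sum>m\<in>-{0}. card (Bt u \<inter> Bt (smul m v)))"
    by (intro sum.cong refl sum_nonzero_mult_left[where f = "\<lambda>m. card (Bt u \<inter> Bt (smul m v))"]) simp
  finally show "card (Et u \<inter> Et v)
      = (card (UNIV::'a set) - 1) * (\<Sum>m\<in>-{0::'a}. card (Bt u \<inter> Bt (smul m v)))"
    by (simp add: card_nonzero)
qed

end
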